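(* In the Hidden Hallucination algorithm described in the context, for every phase $\ell$, the censored ledger $\lambda_{\mathrm{cens},\ell}$ and the honest ledger $\lambda_{\mathrm{hon},\ell}$ are both hygienic; that is, for $\hat\lambda\in\{\lambda_{\mathrm{cens},\ell},\lambda_{\mathrm{hon},\ell}\}$, \[\Pr[\mu_\star\in\cdot\mid\hat\lambda]=\Pr_{\mathrm{can}}[\mu_\star\in\cdot\mid\hat\lambda],\] where the left side is the true Bayesian posterior of $\mu_\star$ given the realized value of the random ledger $\hat\lambda$ (including its policies and censoring set) generated by the algorithm and the agents' behavior.
   Context: MDPs. Fix positive integers $S,A,H$. An MDP model $\mu$ specifies for each triple $(x,a,h)\in[S]\times[A]\times[H]$ a reward distribution $R_\mu(x,a,h)$ on $[0,1]$ (all supported on a common countable set) with mean $r_\mu(x,a,h)$, transition distribution $p_\mu(\cdot\mid x,a,h)$ on $[S]$ and initial distribution $p_\mu(\cdot\mid0)$; an episode generates a trajectory $(x_h,a_h,r_h,h)_{h\in[H]}$ with $x_1\sim p_\mu(\cdot\mid0)$, $r_h\sim R_\mu(x_h,a_h,h)$, $x_{h+1}\sim p_\mu(\cdot\mid x_h,a_h,h)$. $\Pi_{\mathrm{mkv}}$ is the set of deterministic Markov policies $\pi:[S]\times[H]\to[A]$; $V(\pi,\mu)$ is the expected total reward. Incentivized RL. A prior $\mathbf{p}$ over models is known to all; $\mu_\star\sim\mathbf{p}$. In each episode $k$ the principal chooses a signal $\sigma_k$ via a known algorithm; agent $k$ chooses $\pi_k\in\arg\max_{\pi\in\Pi_{\mathrm{mkv}}}\mathbb{E}[V(\pi,\mu_\star)\mid\sigma_k]$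 (fixed known tie-breaking); $\pi_k$ is run in $\mu_\star$ producing trajectory $\tau_k$ observed by the principal. Ledgers and canonical posteriors. A ledger $\lambda$ consists of a censoring set $\mathcal{U}_\lambda\subseteq[S]\times[A]\times[H]$ and a finite sequence $(\pi_i,\tau_i)_{i=1}^m$ of policies and trajectories with the rewards at stages $h$ with $(x_h,a_h,h)\in\mathcal{U}_\lambda$ removed. The canonical posterior $\Pr_{\mathrm{can}}[\cdot\mid\lambda]$ is the conditional law of $\mu_\star$ given $\hat\lambda'=\lambda$, where $\mu_\star\sim\mathbf{p}$ and $\hat\lambda'$ is obtained by running each of the fixed (treated as non-random) policies $\pi_1,\dots,\pi_m$ once, independently, in $\mu_\star$ and removing rewards at triples in $\mathcal{U}_\lambda$. Algorithm (Hidden Hallucination), inputs $N_{\mathrm{ph}},n_{\mathrm{lrn}},\varepsilon_{\mathrm{pun}}$. Phase $\ell$ = episodes $(\ell-1)N_{\mathrm{ph}}+1,\dots,\ell N_{\mathrm{ph}}$, hallucination episode $k_\ell$ uniform in the phase. $\mathcal{U}_\ell$ = set of triples visited in fewer than $n_{\mathrm{lrn}}$ of the episodes $k_1,\dots,k_{\ell-1}$ (under-explored); other triples are fully explored. $\lambda_{\mathrm{cens},\ell}$: the pairs $(\pi_{k_j},\tau_{k_j})_{j<\ell}$ with all rewards removed; $\lambda_{\mathrm{hon},\ell}$: the same pairs with censoring set $\mathcal{U}_\ell$. Punish event $\mathcal{E}_{\mathrm{pun},\ell}=\{r_{\mu_\star}(x,a,h)\le\varepsilon_{\mathrm{pun}}\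 \forall(x,a,h)\notin\mathcal{U}_\ell\}$. At $k=k_\ell$: draw $\mu_{\mathrm{hal},\ell}$ from the posterior of $\mu_\star$ given $\lambda_{\mathrm{cens},\ell}$ and $\mathcal{E}_{\mathrm{pun},\ell}$, and form $\lambda_{\mathrm{hal},\ell}$ with censoring set $\mathcal{U}_\ell$ and each occurrence of a fully explored triple $(x,a,h)$ given an independent reward from $R_{\mu_{\mathrm{hal},\ell}}(x,a,h)$. The signal is $\lambda_{\mathrm{hal},\ell}$ at $k=k_\ell$ and $\lambda_{\mathrm{hon},\ell}$ otherwise in phase $\ell$. *)

theory Defs
  imports "HOL-Probability.Probability"
begin

(* States, actions and stages are 0-based: [S] = {..<S}, [A] = {..<A}, [H] = {..<H}. *)

record mdp =
  init  :: "nat pmf"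
  trans :: "nat \<Rightarrow> nat \<Rightarrow> nat \<Rightarrow> nat pmf"
  rew   :: "nat \<Rightarrow> nat \<Rightarrow> nat \<Rightarrow> real pmf"

type_synonym policy = "nat \<Rightarrow> nat \<Rightarrow> nat"          (* pi x h = action *)
type_synonym traj = "(nat \<times> nat \<times> real option) list" (* (x_h, a_h, r_h or removed); stage = position *)
type_synonym entries = "(policy \<times> traj) list"
type_synonym ledger = "(nat \<times> nat \<times> nat) set \<times> entries" (* censoring set, pairs *)

definition triples :: "nat \<Rightarrow> nat \<Rightarrow> nat \<Rightarrow> (nat \<times> nat \<times> nat) set" where
  "triples S A H = {(x, a, h). x < S \<and> a < A \<and> h < H}"

(* deterministic Markov policies [S] x [H] -> [A] (extensional: 0 outside the domain) *)
definition markov_policies :: "nat \<Rightarrow> nat \<Rightarrow> nat \<Rightarrow> policy set" where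
  "markov_policies S A H =
     {\<pi>. \<forall>x h. if x < S \<and> h < H then \<pi> x h < A else \<pi> x h = 0}"

definition mean_rew :: "mdp \<Rightarrow> nat \<Rightarrow> nat \<Rightarrow> nat \<Rightarrow> real" where
  "mean_rew \<mu> x a h = measure_pmf.expectation (rew \<mu> x a h) (\<lambda>r. r)"

(* running a policy: m remaining stages, starting at stage h in state x *)
primrec gen :: "mdp \<Rightarrow> policy \<Rightarrow> nat \<Rightarrow> nat \<Rightarrow> nat \<Rightarrow> traj pmf" where
  "gen \<mu> \<pi> h 0 x = return_pmf []"
| "gen \<mu> \<pi> h (Suc m) x =
     bind_pmf (rew \<mu> x (\<pi> x h) h) (\<lambda>r.
     bind_pmf (trans \<mu> x (\<pi> x h) h) (\<lambda>y.
     map_pmf (\<lambda>rest. (x, \<pi> x h, Some r) # rest) (gen \<mu> \<pi> (Suc h) m y)))"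

definition run :: "nat \<Rightarrow> mdp \<Rightarrow> policy \<Rightarrow> traj pmf" where
  "run H \<mu> \<pi> = bind_pmf (init \<mu>) (gen \<mu> \<pi> 0 H)"

primrec vtogo :: "mdp \<Rightarrow> policy \<Rightarrow> nat \<Rightarrow> nat \<Rightarrow> nat \<Rightarrow> real" where
  "vtogo \<mu> \<pi> h 0 x = 0"
| "vtogo \<mu> \<pi> h (Suc m) x =
     mean_rew \<mu> x (\<pi> x h) h
     + measure_pmf.expectation (trans \<mu> x (\<pi> x h) h) (vtogo \<mu> \<pi> (Suc h) m)"

definition mdp_value :: "nat \<Rightarrow> policy \<Rightarrow> mdp \<Rightarrow> real" where
  "mdp_value H \<pi> \<mu> = measure_pmf.expectation (init \<mu>) (vtogo \<mu> \<pi> 0 H)"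

definition censor :: "(nat \<times> nat \<times> nat) set \<Rightarrow> traj \<Rightarrow> traj" where
  "censor U \<tau> = map (\<lambda>(h, x, a, r). (x, a, if (x, a, h) \<in> U then None else r))
                     (zip [0..<length \<tau>] \<tau>)"

definition visits :: "nat \<times> nat \<times> nat \<Rightarrow> traj \<Rightarrow> bool" where
  "visits t \<tau> = (case t of (x, a, h) \<Rightarrow>
      h < length \<tau> \<and> fst (\<tau> ! h) = x \<and> fst (snd (\<tau> ! h)) = a)"

definition underexplored :: "nat \<Rightarrow> nat \<Rightarrow> nat \<Rightarrow> nat \<Rightarrow> entries \<Rightarrow> (nat \<times> nat \<times> nat) set" where
  "underexplored S A H nlrn es =
     {t \<in> triples S A H. length (filter (\<lambda>(\<pi>, \<tau>). visits t \<tau>) es) < nlrn}"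

definition cens_ledger :: "nat \<Rightarrow> nat \<Rightarrow> nat \<Rightarrow> entries \<Rightarrow> ledger" where
  "cens_ledger S A H es =
     (triples S A H, map (\<lambda>(\<pi>, \<tau>). (\<pi>, censor (triples S A H) \<tau>)) es)"

definition hon_ledger :: "nat \<Rightarrow> nat \<Rightarrow> nat \<Rightarrow> nat \<Rightarrow> entries \<Rightarrow> ledger" where
  "hon_ledger S A H nlrn es =
     (let U = underexplored S A H nlrn es
      in (U, map (\<lambda>(\<pi>, \<tau>). (\<pi>, censor U \<tau>)) es))"

fun hal_traj :: "mdp \<Rightarrow> (nat \<times> nat \<times> nat) set \<Rightarrow> nat \<Rightarrow> traj \<Rightarrow> traj pmf" where
  "hal_traj \<mu> U h [] = return_pmf []"
| "hal_traj \<mu> U h ((x, a, r) # \<tau>) =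
     (if (x, a, h) \<in> U
      then map_pmf (\<lambda>rest. (x, a, None) # rest) (hal_traj \<mu> U (Suc h) \<tau>)
      else bind_pmf (rew \<mu> x a h) (\<lambda>r'.
             map_pmf (\<lambda>rest. (x, a, Some r') # rest) (hal_traj \<mu> U (Suc h) \<tau>)))"

primrec hal_entries :: "mdp \<Rightarrow> (nat \<times> nat \<times> nat) set \<Rightarrow> entries \<Rightarrow> entries pmf" where
  "hal_entries \<mu> U [] = return_pmf []"
| "hal_entries \<mu> U (e # es) =
     bind_pmf (hal_traj \<mu> U 0 (snd e)) (\<lambda>\<tau>'.
     map_pmf (\<lambda>rest. (fst e, \<tau>') # rest) (hal_entries \<mu> U es))"

definition hal_ledger :: "mdp \<Rightarrow> (nat \<times> nat \<times> nat) set \<Rightarrow> entries \<Rightarrow> ledger pmf" where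
  "hal_ledger \<mu> U es = map_pmf (\<lambda>es'. (U, es')) (hal_entries \<mu> U es)"

definition Epun :: "nat \<Rightarrow> nat \<Rightarrow> nat \<Rightarrow> real \<Rightarrow> (nat \<times> nat \<times> nat) set \<Rightarrow> mdp set" where
  "Epun S A H eps U = {\<mu>. \<forall>(x, a, h) \<in> triples S A H - U. mean_rew \<mu> x a h \<le> eps}"

(* Law of lambda_hal given the realized censored ledger c = lambda_cens.
   ch mu is the law (given mu_star = mu) of the recorded hallucination-episode history
   of the previous phases.  mu_hal is drawn from the (true Bayesian) posterior of mu_star
   given lambda_cens = c and E_pun, then the rewards are drawn from R_{mu_hal};
   mu_hal is integrated out. *)
definition hal_kernel ::
  "mdp measure \<Rightarrow> nat \<Rightarrow> nat \<Rightarrow> nat \<Rightarrow> nat \<Rightarrow> real \<Rightarrow> (mdp \<Rightarrow> entries pmf) \<Rightarrow> ledger \<Rightarrow> ledger pmf" where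
  "hal_kernel P S A H nlrn eps ch c =
     (let U = underexplored S A H nlrn (snd c);
          E = Epun S A H eps U;
          w = (\<lambda>\<mu>. pmf (map_pmf (cens_ledger S A H) (ch \<mu>)) c);
          ZE = (\<integral>\<mu>. indicator E \<mu> * w \<mu> \<partial>P);
          Z = (\<integral>\<mu>. w \<mu> \<partial>P)
      in if 0 < ZE then
           embed_pmf (\<lambda>l. (\<integral>\<mu>. indicator E \<mu> * w \<mu> * pmf (hal_ledger \<mu> U (snd c)) l \<partial>P) / ZE)
         else if 0 < Z then
           embed_pmf (\<lambda>l. (\<integral>\<mu>. w \<mu> * pmf (hal_ledger \<mu> U (snd c)) l \<partial>P) / Z)
         else return_pmf c)"

(* law of the signal sigma_k of an episode k of phase l given mu_star = mu:
   lambda_hal with probability 1/N_ph (k = k_l), lambda_hon otherwise *)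
definition signal ::
  "mdp measure \<Rightarrow> nat \<Rightarrow> nat \<Rightarrow> nat \<Rightarrow> nat \<Rightarrow> nat \<Rightarrow> real \<Rightarrow> (mdp \<Rightarrow> entries pmf) \<Rightarrow> mdp \<Rightarrow> ledger pmf" where
  "signal P S A H Nph nlrn eps ch \<mu> =
     bind_pmf (bernoulli_pmf (1 / real Nph)) (\<lambda>b.
       if b then bind_pmf (ch \<mu>) (\<lambda>es. hal_kernel P S A H nlrn eps ch (cens_ledger S A H es))
       else map_pmf (hon_ledger S A H nlrn) (ch \<mu>))"

definition post_value ::
  "mdp measure \<Rightarrow> nat \<Rightarrow> nat \<Rightarrow> nat \<Rightarrow> nat \<Rightarrow> nat \<Rightarrow> real \<Rightarrow> (mdp \<Rightarrow> entries pmf) \<Rightarrow> policy \<Rightarrow> ledger \<Rightarrow> real" where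
  "post_value P S A H Nph nlrn eps ch \<pi> s =
     (\<integral>\<mu>. mdp_value H \<pi> \<mu> * pmf (signal P S A H Nph nlrn eps ch \<mu>) s \<partial>P)
     / (\<integral>\<mu>. pmf (signal P S A H Nph nlrn eps ch \<mu>) s \<partial>P)"

definition agent_choice ::
  "mdp measure \<Rightarrow> nat \<Rightarrow> nat \<Rightarrow> nat \<Rightarrow> nat \<Rightarrow> nat \<Rightarrow> real \<Rightarrow> (nat \<Rightarrow> ledger \<Rightarrow> policy set \<Rightarrow> policy)
     \<Rightarrow> (mdp \<Rightarrow> entries pmf) \<Rightarrow> nat \<Rightarrow> ledger \<Rightarrow> policy" where
  "agent_choice P S A H Nph nlrn eps tb ch k s =
     tb k s {\<pi> \<in> markov_policies S A H. \<forall>\<pi>' \<in> markov_policies S A H.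
               post_value P S A H Nph nlrn eps ch \<pi>' s \<le> post_value P S A H Nph nlrn eps ch \<pi> s}"

(* one more phase (phase n+1, episodes n*Nph+1 .. (n+1)*Nph); only the hallucination
   episode k_{n+1} is recorded, as only those enter the ledgers *)
definition next_phase ::
  "mdp measure \<Rightarrow> nat \<Rightarrow> nat \<Rightarrow> nat \<Rightarrow> nat \<Rightarrow> nat \<Rightarrow> real \<Rightarrow> (nat \<Rightarrow> ledger \<Rightarrow> policy set \<Rightarrow> policy)
     \<Rightarrow> nat \<Rightarrow> (mdp \<Rightarrow> entries pmf) \<Rightarrow> mdp \<Rightarrow> entries pmf" where
  "next_phase P S A H Nph nlrn eps tb n ch \<mu> =
     bind_pmf (ch \<mu>) (\<lambda>es.
     bind_pmf (pmf_of_set {n * Nph + 1 .. Suc n * Nph}) (\<lambda>k.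
     bind_pmf (hal_kernel P S A H nlrn eps ch (cens_ledger S A H es)) (\<lambda>l.
       let \<pi> = agent_choice P S A H Nph nlrn eps tb ch k l
       in map_pmf (\<lambda>\<tau>. es @ [(\<pi>, \<tau>)]) (run H \<mu> \<pi>))))"

(* law, given mu_star = mu, of the pairs (pi_{k_j}, tau_{k_j})_{j <= n} (uncensored) *)
primrec hh_history ::
  "mdp measure \<Rightarrow> nat \<Rightarrow> nat \<Rightarrow> nat \<Rightarrow> nat \<Rightarrow> nat \<Rightarrow> real \<Rightarrow> (nat \<Rightarrow> ledger \<Rightarrow> policy set \<Rightarrow> policy)
     \<Rightarrow> nat \<Rightarrow> mdp \<Rightarrow> entries pmf" where
  "hh_history P S A H Nph nlrn eps tb 0 = (\<lambda>\<mu>. return_pmf [])"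
| "hh_history P S A H Nph nlrn eps tb (Suc n) =
     next_phase P S A H Nph nlrn eps tb n (hh_history P S A H Nph nlrn eps tb n)"

definition true_posterior ::
  "mdp measure \<Rightarrow> (mdp \<Rightarrow> entries pmf) \<Rightarrow> (entries \<Rightarrow> ledger) \<Rightarrow> ledger \<Rightarrow> mdp set \<Rightarrow> real" where
  "true_posterior P hist L l B =
     (\<integral>\<mu>. indicator B \<mu> * pmf (map_pmf L (hist \<mu>)) l \<partial>P)
     / (\<integral>\<mu>. pmf (map_pmf L (hist \<mu>)) l \<partial>P)"

(* Pr[lam_hat' = l | mu_star = mu] for the canonical ledger: each pi_i run once independently *)
definition can_likelihood :: "nat \<Rightarrow> ledger \<Rightarrow> mdp \<Rightarrow> real" where
  "can_likelihood H l \<mu> =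
     prod_list (map (\<lambda>(\<pi>, \<tau>). pmf (map_pmf (censor (fst l)) (run H \<mu> \<pi>)) \<tau>) (snd l))"

definition can_posterior :: "mdp measure \<Rightarrow> nat \<Rightarrow> ledger \<Rightarrow> mdp set \<Rightarrow> real" where
  "can_posterior P H l B =
     (\<integral>\<mu>. indicator B \<mu> * can_likelihood H l \<mu> \<partial>P) / (\<integral>\<mu>. can_likelihood H l \<mu> \<partial>P)"

end

theory Submission
  imports Defs
begin

(* Given mu_star = mu, the recorded history grows by one pair per phase: a policy is drawn
   from a law that depends on the past only through the fully censored ledger (the
   hallucination kernel and the agents' choices see nothing else), and then that policy is
   run in mu.  Every censoring set U lies inside the set of all triples, so the fully
   censored ledger is a function of the U-censored history.  Hence the probability of
   observing the U-censored history e factors as c(e) times the canonical likelihood of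
   (U, e), with c(e) independent of mu, and c(e) cancels in Bayes' formula.  For the honest
   ledger the censoring set U_l is itself read off the censored history, since censoring
   rewards does not change which triples are visited. *)

definition censor_entries :: "(nat \<times> nat \<times> nat) set \<Rightarrow> entries \<Rightarrow> entries" where
  "censor_entries U es = map (\<lambda>(\<pi>, \<tau>). (\<pi>, censor U \<tau>)) es"

lemma length_censor [simp]: "length (censor U \<tau>) = length \<tau>"
  by (simp add: censor_def)

lemma nth_censor:
  "h < length \<tau> \<Longrightarrow> censor U \<tau> ! h =
     (fst (\<tau> ! h), fst (snd (\<tau> ! h)),
      if (fst (\<tau> ! h), fst (snd (\<tau> ! h)), h) \<in> U then None else snd (snd (\<tau> ! h)))"
  by (simp add: censor_def split: prod.splits)

lemma censor_censor_subset: "U \<subseteq> T \<Longrightarrow> censor T (censor U \<tau>) = censor T \<tau>"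
  by (rule nth_equalityI) (auto simp: nth_censor)

lemma censor_entries_censor_entries_subset:
  "U \<subseteq> T \<Longrightarrow> censor_entries T (censor_entries U es) = censor_entries T es"
  by (auto simp: censor_entries_def censor_censor_subset)

lemma censor_entries_snoc:
  "censor_entries U (es @ [(\<pi>, \<tau>)]) = censor_entries U es @ [(\<pi>, censor U \<tau>)]"
  by (simp add: censor_entries_def)

lemma visits_censor [simp]: "visits t (censor U \<tau>) = visits t \<tau>"
  by (auto simp: visits_def nth_censor split: prod.splits)

lemma underexplored_censor_entries [simp]:
  "underexplored S A H nlrn (censor_entries U es) = underexplored S A H nlrn es"
proof -
  have "filter (\<lambda>(\<pi>, \<tau>). visits t \<tau>) (censor_entries U es)
          = censor_entries U (filter (\<lambda>(\<pi>, \<tau>). visits t \<tau>) es)" for t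
    by (induction es) (auto simp: censor_entries_def)
  then show ?thesis
    by (simp add: underexplored_def censor_entries_def)
qed

lemma underexplored_subset_triples: "underexplored S A H nlrn es \<subseteq> triples S A H"
  by (auto simp: underexplored_def)

lemma cens_ledger_vimage:
  "cens_ledger S A H -` {(U, e)} =
     (if U = triples S A H then censor_entries U -` {e} else {})"
  by (auto simp: cens_ledger_def censor_entries_def)

lemma hon_ledger_vimage:
  "hon_ledger S A H nlrn -` {(U, e)} =
     (if U = underexplored S A H nlrn e then censor_entries U -` {e} else {})"
proof -
  have "hon_ledger S A H nlrn es = (U, e) \<longleftrightarrow>
          U = underexplored S A H nlrn e \<and> censor_entries U es = e" for es
  proof
    assume "hon_ledger S A H nlrn es = (U, e)"
    then have "U = underexplored S A H nlrn es" "censor_entries U es = e"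
      by (auto simp: hon_ledger_def censor_entries_def Let_def)
    then show "U = underexplored S A H nlrn e \<and> censor_entries U es = e"
      by auto
  next
    assume "U = underexplored S A H nlrn e \<and> censor_entries U es = e"
    then have "U = underexplored S A H nlrn es" "censor_entries U es = e"
      by (metis underexplored_censor_entries)+
    then show "hon_ledger S A H nlrn es = (U, e)"
      by (simp add: hon_ledger_def censor_entries_def)
  qed
  then show ?thesis
    by auto
qed

lemma can_likelihood_snoc:
  "can_likelihood H (U, es @ [(\<pi>, \<tau>)]) \<mu>
     = can_likelihood H (U, es) \<mu> * pmf (map_pmf (censor U) (run H \<mu> \<pi>)) \<tau>"
  by (simp add: can_likelihood_def)

lemma pmf_bind_map_inj:
  assumes inj: "\<And>a b a' b'. f a b = f a' b' \<Longrightarrow> a = a' \<and> b = b'"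
  shows "pmf (bind_pmf M (\<lambda>a. map_pmf (f a) (D a))) (f a0 b0) = pmf M a0 * pmf (D a0) b0"
proof -
  have "pmf (map_pmf (f a) (D a)) (f a0 b0) = indicator {a0} a * pmf (D a0) b0" for a
  proof (cases "a = a0")
    case True
    have "inj (f a0)"
      using inj by (meson injI)
    then show ?thesis
      using True by (simp add: pmf_map_inj')
  next
    case False
    then have "f a0 b0 \<notin> set_pmf (map_pmf (f a) (D a))"
      using inj by auto
    then show ?thesis
      using False by (simp add: set_pmf_eq)
  qed
  then show ?thesis
    by (simp add: pmf_bind measure_pmf_single)
qed

definition phase_policy ::
  "mdp measure \<Rightarrow> nat \<Rightarrow> nat \<Rightarrow> nat \<Rightarrow> nat \<Rightarrow> nat \<Rightarrow> real \<Rightarrow> (nat \<Rightarrow> ledger \<Rightarrow> policy set \<Rightarrow> policy)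
     \<Rightarrow> nat \<Rightarrow> (mdp \<Rightarrow> entries pmf) \<Rightarrow> ledger \<Rightarrow> policy pmf" where
  "phase_policy P S A H Nph nlrn eps tb n ch c =
     bind_pmf (pmf_of_set {n * Nph + 1 .. Suc n * Nph}) (\<lambda>k.
       map_pmf (agent_choice P S A H Nph nlrn eps tb ch k) (hal_kernel P S A H nlrn eps ch c))"

lemma map_censor_entries_next_phase:
  assumes "U \<subseteq> triples S A H"
  shows "map_pmf (censor_entries U) (next_phase P S A H Nph nlrn eps tb n ch \<mu>) =
    bind_pmf (map_pmf (censor_entries U) (ch \<mu>)) (\<lambda>e. map_pmf (\<lambda>x. e @ [x])
      (bind_pmf (phase_policy P S A H Nph nlrn eps tb n ch
                   (triples S A H, censor_entries (triples S A H) e))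
        (\<lambda>\<pi>. map_pmf (Pair \<pi>) (map_pmf (censor U) (run H \<mu> \<pi>)))))"
proof -
  have "cens_ledger S A H es
          = (triples S A H, censor_entries (triples S A H) (censor_entries U es))" for es
    using censor_entries_censor_entries_subset[OF assms]
    by (simp add: cens_ledger_def censor_entries_def)
  then show ?thesis
    unfolding next_phase_def phase_policy_def Let_def
    by (simp add: map_bind_pmf bind_map_pmf bind_assoc_pmf map_pmf_comp censor_entries_snoc
        o_def bind_return_pmf map_pmf_def[symmetric])
qed

lemma hh_history_censored_likelihood:
  assumes "U \<subseteq> triples S A H"
  shows "\<exists>c. \<forall>\<mu>. pmf (map_pmf (censor_entries U) (hh_history P S A H Nph nlrn eps tb n \<mu>)) e
                   = c * can_likelihood H (U, e) \<mu>"
proof (induction n arbitrary: e)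
  case 0
  show ?case
    by (rule exI[of _ "if e = [] then 1 else 0"])
      (auto simp: can_likelihood_def censor_entries_def pmf_return)
next
  case (Suc n)
  let ?hist = "hh_history P S A H Nph nlrn eps tb"
  show ?case
  proof (cases e rule: rev_cases)
    case Nil
    then have "pmf (map_pmf (censor_entries U) (?hist (Suc n) \<mu>)) e = 0" for \<mu>
      by (simp add: map_censor_entries_next_phase[OF assms] pmf_eq_0_set_pmf) blast
    then show ?thesis
      by auto
  next
    case (snoc e0 x0)
    obtain \<pi>0 \<tau>0 where x0: "x0 = (\<pi>0, \<tau>0)"
      by force
    obtain c0 where c0:
      "\<forall>\<mu>. pmf (map_pmf (censor_entries U) (?hist n \<mu>)) e0 = c0 * can_likelihood H (U, e0) \<mu>"
      using Suc by blast
    define Q where "Q = phase_policy P S A H Nph nlrn eps tb n (?hist n)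
                          (triples S A H, censor_entries (triples S A H) e0)"
    have "pmf (map_pmf (censor_entries U) (?hist (Suc n) \<mu>)) e
            = pmf (map_pmf (censor_entries U) (?hist n \<mu>)) e0 *
              pmf (bind_pmf Q (\<lambda>\<pi>. map_pmf (Pair \<pi>) (map_pmf (censor U) (run H \<mu> \<pi>)))) x0"
      for \<mu>
      unfolding snoc hh_history.simps map_censor_entries_next_phase[OF assms] Q_def
      by (rule pmf_bind_map_inj) auto
    also have "\<dots> \<mu> = (c0 * pmf Q \<pi>0) * can_likelihood H (U, e) \<mu>" for \<mu>
      unfolding x0 by (subst pmf_bind_map_inj) (auto simp: c0 snoc x0 can_likelihood_snoc)
    finally show ?thesis
      by blast
  qed
qed

lemma hh_history_ledger_likelihood:
  assumes "L \<in> {cens_ledger S A H, hon_ledger S A H nlrn}"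
  shows "\<exists>c. \<forall>\<mu>. pmf (map_pmf L (hh_history P S A H Nph nlrn eps tb n \<mu>)) l
                   = c * can_likelihood H l \<mu>"
proof -
  obtain U e where l: "l = (U, e)"
    by force
  consider "L -` {l} = {}"
    | "L -` {l} = censor_entries U -` {e}" "U \<subseteq> triples S A H"
  proof (cases "L = cens_ledger S A H")
    case True
    then show thesis
      using that by (cases "U = triples S A H") (simp_all add: l cens_ledger_vimage)
  next
    case False
    then have "L = hon_ledger S A H nlrn"
      using assms by simp
    then show thesis
      using that underexplored_subset_triples[of S A H nlrn e]
      by (cases "U = underexplored S A H nlrn e") (simp_all add: l hon_ledger_vimage)
  qed
  then show ?thesis
  proof cases
    case 1
    then show ?thesis
      by (intro exI[of _ 0]) (simp add: pmf_map)
  next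
    case 2
    then show ?thesis
      using hh_history_censored_likelihood[of U S A H P Nph nlrn eps tb n e]
      by (simp add: pmf_map l)
  qed
qed

lemma posterior_proportional_likelihood:
  fixes f g :: "'a \<Rightarrow> real"
  assumes "\<And>\<mu>. f \<mu> = c * g \<mu>" and "(\<integral>\<mu>. f \<mu> \<partial>P) \<noteq> 0"
  shows "(\<integral>\<mu>. indicator B \<mu> * f \<mu> \<partial>P) / (\<integral>\<mu>. f \<mu> \<partial>P)
           = (\<integral>\<mu>. indicator B \<mu> * g \<mu> \<partial>P) / (\<integral>\<mu>. g \<mu> \<partial>P)"
proof -
  have "c \<noteq> 0"
  proof
    assume "c = 0"
    then have "f = (\<lambda>_. 0)"
      using assms(1) by fastforce
    then show False
      using assms(2) by simp
  qed
  then show ?thesis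
    using assms(1) by (simp add: mult.left_commute[of _ c])
qed

(* Neither the prior nor the models need any regularity: the likelihood factorisation holds
   pointwise in mu, and the constant factor pulls out of the integrals without integrability. *)
theorem lemma1:
  fixes P :: "mdp measure" and S A H Nph nlrn :: nat and eps :: real
    and Rvals :: "real set"
    and tb :: "nat \<Rightarrow> ledger \<Rightarrow> policy set \<Rightarrow> policy"
  assumes prior: "prob_space P"
    and pos: "0 < S" "0 < A" "0 < H" "0 < Nph"
    and Rvals: "countable Rvals" "Rvals \<subseteq> {0..1}"
    and models: "\<forall>\<mu>\<in>space P. set_pmf (init \<mu>) \<subseteq> {..<S} \<and>
        (\<forall>x a h. x < S \<longrightarrow> a < A \<longrightarrow> h < H \<longrightarrow>
           set_pmf (trans \<mu> x a h) \<subseteq> {..<S} \<and> set_pmf (rew \<mu> x a h) \<subseteq> Rvals)"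
    and meas_init: "\<forall>y. (\<lambda>\<mu>. pmf (init \<mu>) y) \<in> borel_measurable P"
    and meas_trans: "\<forall>x a h y. (\<lambda>\<mu>. pmf (trans \<mu> x a h) y) \<in> borel_measurable P"
    and meas_rew: "\<forall>x a h r. (\<lambda>\<mu>. pmf (rew \<mu> x a h) r) \<in> borel_measurable P"
    and tiebreak: "\<forall>k s X. X \<noteq> {} \<longrightarrow> tb k s X \<in> X"
  shows "\<forall>ph::nat. 1 \<le> ph \<longrightarrow>
           (\<forall>L \<in> {cens_ledger S A H, hon_ledger S A H nlrn}. \<forall>l B.
              B \<in> sets P \<and>
              0 < (\<integral>\<mu>. pmf (map_pmf L (hh_history P S A H Nph nlrn eps tb (ph - 1) \<mu>)) l \<partial>P)
              \<longrightarrow> true_posterior P (hh_history P S A H Nph nlrn eps tb (ph - 1)) L l B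
                  = can_posterior P H l B)"
proof (intro allI impI ballI)
  fix ph :: nat and L l and B :: "mdp set"
  let ?hist = "hh_history P S A H Nph nlrn eps tb (ph - 1)"
  assume "L \<in> {cens_ledger S A H, hon_ledger S A H nlrn}"
  then obtain c where "\<And>\<mu>. pmf (map_pmf L (?hist \<mu>)) l = c * can_likelihood H l \<mu>"
    using hh_history_ledger_likelihood by blast
  moreover assume "B \<in> sets P \<and> 0 < (\<integral>\<mu>. pmf (map_pmf L (?hist \<mu>)) l \<partial>P)"
  ultimately show "true_posterior P ?hist L l B = can_posterior P H l B"
    unfolding true_posterior_def can_posterior_def
    by (intro posterior_proportional_likelihood) auto
qed

end
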